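(* Assume (A1) and let $\alpha\in\mathbb R$. Let $\mathsf M$ be a convex subset of $\mathcal M_1(\mathsf T)$ and let $\zeta_1,\zeta_2\in\mathsf M$ satisfy $\Psi_\alpha(\zeta_1)=\Psi_\alpha(\zeta_2)=\inf_{\zeta\in\mathsf M}\Psi_\alpha(\zeta)<\infty$. Then $\zeta_1K=\zeta_2K$.
   Context: Let $(\mathsf Y,\mathcal Y,\nu)$ be a measure space with $\nu$ $\sigma$-finite, $(\mathsf T,\mathcal T)$ a measurable space and $\mathcal M_1(\mathsf T)$ its probability measures. Let $k:\mathsf T\times\mathsf Y\to[0,\infty)$ be measurable with $\int k(\theta,y)\nu(dy)=1$, $K(\theta,A)=\int_Ak(\theta,y)\nu(dy)$, $\zeta K(A)=\int\zeta(d\theta)K(\theta,A)$, and $\zeta k(y)=\int\zeta(d\theta)k(\theta,y)$. Let $p$ be measurable positive on $\mathsf Y$. $f_0(u)=u-1-\log u$, $f_1(u)=1-u+u\log u$, $f_\alpha(u)=\frac{1}{\alpha(\alpha-1)}[u^\alpha-1-\alpha(u-1)]$ otherwise; $\Psi_\alpha(\zeta)=\int_{\mathsf Y}f_\alpha(\zeta k(y)/p(y))p(y)\nu(dy)$. Assumption (A1): $k>0$, $p>0$ everywhere and $\int p\,d\nu<\infty$. *)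

theory Defs
  imports "HOL-Probability.Probability"
begin

definition prob_measures :: "'t measure \<Rightarrow> 't measure set" where
  "prob_measures MT = space (prob_algebra MT)"

definition mix_measure :: "'t measure \<Rightarrow> real \<Rightarrow> 't measure \<Rightarrow> 't measure \<Rightarrow> 't measure" where
  "mix_measure MT t z1 z2 =
     measure_of (space MT) (sets MT)
       (\<lambda>A. ennreal t * emeasure z1 A + ennreal (1 - t) * emeasure z2 A)"

definition convex_measure_set :: "'t measure \<Rightarrow> 't measure set \<Rightarrow> bool" where
  "convex_measure_set MT M \<longleftrightarrow>
     (\<forall>z1\<in>M. \<forall>z2\<in>M. \<forall>t::real. 0 \<le> t \<and> t \<le> 1 \<longrightarrow> mix_measure MT t z1 z2 \<in> M)"

definition kernelK :: "'y measure \<Rightarrow> ('t \<Rightarrow> 'y \<Rightarrow> real) \<Rightarrow> 't \<Rightarrow> 'y set \<Rightarrow> ennreal" where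
  "kernelK nu k \<theta> A = (\<integral>\<^sup>+ y\<in>A. ennreal (k \<theta> y) \<partial>nu)"

definition mixK :: "'y measure \<Rightarrow> ('t \<Rightarrow> 'y \<Rightarrow> real) \<Rightarrow> 't measure \<Rightarrow> 'y set \<Rightarrow> ennreal" where
  "mixK nu k \<zeta> A = (\<integral>\<^sup>+ \<theta>. kernelK nu k \<theta> A \<partial>\<zeta>)"

definition mixk :: "('t \<Rightarrow> 'y \<Rightarrow> real) \<Rightarrow> 't measure \<Rightarrow> 'y \<Rightarrow> real" where
  "mixk k \<zeta> y = (\<integral> \<theta>. k \<theta> y \<partial>\<zeta>)"

definition f_alpha :: "real \<Rightarrow> real \<Rightarrow> real" where
  "f_alpha \<alpha> u =
     (if \<alpha> = 0 then u - 1 - ln u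
      else if \<alpha> = 1 then 1 - u + u * ln u
      else (1 / (\<alpha> * (\<alpha> - 1))) * (u powr \<alpha> - 1 - \<alpha> * (u - 1)))"

definition Psi :: "'y measure \<Rightarrow> ('t \<Rightarrow> 'y \<Rightarrow> real) \<Rightarrow> ('y \<Rightarrow> real) \<Rightarrow> real \<Rightarrow> 't measure \<Rightarrow> ennreal" where
  "Psi nu k p \<alpha> \<zeta> = (\<integral>\<^sup>+ y. ennreal (f_alpha \<alpha> (mixk k \<zeta> y / p y) * p y) \<partial>nu)"

end

theory Submission
  imports Defs
begin

text \<open>
  The generator \<open>f_alpha\<close> is strictly convex on \<open>(0, \<infinity>)\<close> and nonnegative, with minimum
  \<open>f_alpha 1 = 0\<close>. Since \<open>\<zeta> \<mapsto> \<zeta>k\<close> is affine, the midpoint \<open>\<zeta>\<close> of \<open>\<zeta>1\<close> and \<open>\<zeta>2\<close> (which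
  lies in \<open>M\<close>) satisfies, pointwise,
  \<open>2 f(\<zeta>k/p) p + D = f(\<zeta>1k/p) p + f(\<zeta>2k/p) p\<close> with a defect \<open>D \<ge> 0\<close> that vanishes only
  where \<open>\<zeta>1k = \<zeta>2k\<close>. Integrating gives \<open>2 \<Psi>(\<zeta>) + \<integral>D = \<Psi>(\<zeta>1) + \<Psi>(\<zeta>2) = 2 inf \<Psi> \<le> 2 \<Psi>(\<zeta>)\<close>,
  so by finiteness \<open>\<integral>D = 0\<close>, hence \<open>\<zeta>1k = \<zeta>2k\<close> \<open>\<nu>\<close>-a.e., and Tonelli turns this into
  \<open>\<zeta>1K = \<zeta>2K\<close>.
\<close>

lemma midpoint_strict_convex_if_deriv_strict_mono:
  fixes F F' :: "real \<Rightarrow> real"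
  assumes deriv: "\<And>x. 0 < x \<Longrightarrow> (F has_real_derivative F' x) (at x)"
    and mono: "\<And>x y. 0 < x \<Longrightarrow> x < y \<Longrightarrow> F' x < F' y"
    and "0 < u" "0 < v" "u \<noteq> v"
  shows "2 * F ((u + v) / 2) < F u + F v"
proof -
  have less: "2 * F ((a + b) / 2) < F a + F b" if a: "0 < a" and ab: "a < b" for a b
  proof -
    define m where "m = (a + b) / 2"
    have am: "a < m" and mb: "m < b" using ab by (auto simp: m_def)
    obtain c where c: "a < c" "c < m" "F m - F a = (m - a) * F' c"
      using MVT2[OF am, of F F'] deriv a by (metis less_le_trans)
    obtain d where d: "m < d" "d < b" "F b - F m = (b - m) * F' d"
      using MVT2[OF mb, of F F'] deriv a am by (metis less_le_trans less_trans)
    have "F' c < F' d" using mono c d a am by (meson less_trans)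
    moreover have "m - a = b - m" "0 < m - a" using am by (auto simp: m_def field_simps)
    ultimately have "F m - F a < F b - F m" using c(3) d(3) by (metis mult_strict_left_mono)
    then show ?thesis by (simp add: m_def)
  qed
  show ?thesis
    using less[of u v] less[of v u] assms(3-5) by (cases "u < v") (auto simp: add.commute)
qed

lemma min_at_critical_point_if_deriv_strict_mono:
  fixes F F' :: "real \<Rightarrow> real"
  assumes deriv: "\<And>x. 0 < x \<Longrightarrow> (F has_real_derivative F' x) (at x)"
    and mono: "\<And>x y. 0 < x \<Longrightarrow> x < y \<Longrightarrow> F' x < F' y"
    and "0 < c" "F' c = 0" "0 < u"
  shows "F c \<le> F u"
proof -
  consider "u < c" | "u = c" | "c < u" by linarith
  then show ?thesis
  proof cases
    case 1
    obtain a where "u < a" "a < c" "F c - F u = (c - u) * F' a"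
      using MVT2[OF 1, of F F'] deriv \<open>0 < u\<close> by (metis less_le_trans)
    moreover have "F' a < 0" using mono[of a c] \<open>u < a\<close> \<open>a < c\<close> \<open>0 < u\<close> \<open>F' c = 0\<close> by auto
    ultimately show ?thesis by (smt (verit) mult_pos_neg)
  next
    case 3
    obtain a where "c < a" "a < u" "F u - F c = (u - c) * F' a"
      using MVT2[OF 3, of F F'] deriv \<open>0 < c\<close> by (metis less_le_trans)
    moreover have "F' a > 0" using mono[of c a] \<open>c < a\<close> \<open>0 < c\<close> \<open>F' c = 0\<close> by auto
    ultimately show ?thesis by (smt (verit) mult_pos_pos)
  qed simp
qed

definition f_alpha_deriv :: "real \<Rightarrow> real \<Rightarrow> real" where
  "f_alpha_deriv \<alpha> u =
     (if \<alpha> = 0 then 1 - 1 / u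
      else if \<alpha> = 1 then ln u
      else (1 / (\<alpha> * (\<alpha> - 1))) * (\<alpha> * u powr (\<alpha> - 1) - \<alpha>))"

lemma has_real_derivative_f_alpha:
  "0 < x \<Longrightarrow> (f_alpha \<alpha> has_real_derivative f_alpha_deriv \<alpha> x) (at x)"
  unfolding f_alpha_def[abs_def] f_alpha_deriv_def
  by (cases "\<alpha> = 0"; cases "\<alpha> = 1")
     (auto intro!: derivative_eq_intros)

lemma f_alpha_deriv_strict_mono:
  assumes "0 < x" "x < y"
  shows "f_alpha_deriv \<alpha> x < f_alpha_deriv \<alpha> y"
proof -
  have quotient: "f_alpha_deriv \<alpha> z = (z powr (\<alpha> - 1) - 1) / (\<alpha> - 1)"
    if "\<alpha> \<noteq> 0" "\<alpha> \<noteq> 1" for z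
    using that by (simp add: f_alpha_deriv_def field_simps)
  consider "\<alpha> = 0 \<or> \<alpha> = 1" | "1 < \<alpha>" | "\<alpha> < 1" "\<alpha> \<noteq> 0" by linarith
  then show ?thesis
  proof cases
    case 1
    then show ?thesis using assms by (auto simp: f_alpha_deriv_def frac_less2)
  next
    case 2
    then have "x powr (\<alpha> - 1) < y powr (\<alpha> - 1)" using assms by (intro powr_less_mono2) auto
    then show ?thesis using 2 by (simp add: quotient divide_strict_right_mono)
  next
    case 3
    then have "y powr (\<alpha> - 1) < x powr (\<alpha> - 1)" using assms by (intro powr_less_mono2_neg) auto
    then show ?thesis using 3 by (simp add: quotient divide_strict_right_mono_neg)
  qed
qed

lemma f_alpha_nonneg:
  assumes "0 < u"
  shows "0 \<le> f_alpha \<alpha> u"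
proof -
  have "f_alpha \<alpha> 1 \<le> f_alpha \<alpha> u"
    by (rule min_at_critical_point_if_deriv_strict_mono[OF has_real_derivative_f_alpha
        f_alpha_deriv_strict_mono]) (use assms in \<open>auto simp: f_alpha_deriv_def\<close>)
  moreover have "f_alpha \<alpha> 1 = 0" by (simp add: f_alpha_def)
  ultimately show ?thesis by simp
qed

lemma f_alpha_midpoint_less:
  "0 < u \<Longrightarrow> 0 < v \<Longrightarrow> u \<noteq> v \<Longrightarrow> 2 * f_alpha \<alpha> ((u + v) / 2) < f_alpha \<alpha> u + f_alpha \<alpha> v"
  by (rule midpoint_strict_convex_if_deriv_strict_mono[OF has_real_derivative_f_alpha
      f_alpha_deriv_strict_mono])

lemma measurable_f_alpha[measurable (raw)]:
  "g \<in> borel_measurable M \<Longrightarrow> (\<lambda>x. f_alpha \<alpha> (g x)) \<in> borel_measurable M"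
  unfolding f_alpha_def by (cases "\<alpha> = 0"; cases "\<alpha> = 1"; simp; measurable)

lemma space_mix_measure[simp]: "space (mix_measure MT t z1 z2) = space MT"
  by (simp add: mix_measure_def)

lemma sets_mix_measure[simp, measurable_cong]: "sets (mix_measure MT t z1 z2) = sets MT"
  by (simp add: mix_measure_def)

lemma emeasure_mix_measure:
  assumes "sets z1 = sets MT" "sets z2 = sets MT" "A \<in> sets MT"
  shows "emeasure (mix_measure MT t z1 z2) A = ennreal t * emeasure z1 A + ennreal (1 - t) * emeasure z2 A"
  unfolding mix_measure_def
proof (rule emeasure_measure_of_sigma[OF sets.sigma_algebra_axioms _ _ assms(3)])
  show "positive (sets MT) (\<lambda>A. ennreal t * emeasure z1 A + ennreal (1 - t) * emeasure z2 A)"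
    by (simp add: positive_def)
  show "countably_additive (sets MT) (\<lambda>A. ennreal t * emeasure z1 A + ennreal (1 - t) * emeasure z2 A)"
  proof (rule countably_additiveI)
    fix B :: "nat \<Rightarrow> _" assume B: "range B \<subseteq> sets MT" "disjoint_family B"
    have "(\<Sum>i. ennreal t * emeasure z1 (B i) + ennreal (1 - t) * emeasure z2 (B i))
        = (\<Sum>i. ennreal t * emeasure z1 (B i)) + (\<Sum>i. ennreal (1 - t) * emeasure z2 (B i))"
      by (rule suminf_add[symmetric]) auto
    also have "\<dots> = ennreal t * emeasure z1 (\<Union> (range B)) + ennreal (1 - t) * emeasure z2 (\<Union> (range B))"
      using B assms(1,2) by (simp add: suminf_emeasure)
    finally show "(\<Sum>i. ennreal t * emeasure z1 (B i) + ennreal (1 - t) * emeasure z2 (B i)) =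
        ennreal t * emeasure z1 (\<Union> (range B)) + ennreal (1 - t) * emeasure z2 (\<Union> (range B))" .
  qed
qed

lemma mix_measure_in_prob_measures:
  assumes "z1 \<in> prob_measures MT" "z2 \<in> prob_measures MT" "0 \<le> t" "t \<le> 1"
  shows "mix_measure MT t z1 z2 \<in> prob_measures MT"
proof -
  interpret z1: prob_space z1 using assms(1) by (simp add: prob_measures_def space_prob_algebra)
  interpret z2: prob_space z2 using assms(2) by (simp add: prob_measures_def space_prob_algebra)
  have sets: "sets z1 = sets MT" "sets z2 = sets MT"
    using assms(1,2) by (simp_all add: prob_measures_def space_prob_algebra)
  then have "space z1 = space MT" "space z2 = space MT" by (metis sets_eq_imp_space_eq)+
  then have "emeasure (mix_measure MT t z1 z2) (space MT) = ennreal t + ennreal (1 - t)"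
    using sets z1.emeasure_space_1 z2.emeasure_space_1 by (simp add: emeasure_mix_measure)
  also have "\<dots> = 1" using assms(3,4) by (simp flip: ennreal_plus)
  finally show ?thesis
    by (simp add: prob_measures_def space_prob_algebra prob_spaceI)
qed

lemma nn_integral_mix_measure:
  assumes sets: "sets z1 = sets MT" "sets z2 = sets MT" and "f \<in> borel_measurable MT"
  shows "(\<integral>\<^sup>+x. f x \<partial>mix_measure MT t z1 z2)
    = ennreal t * (\<integral>\<^sup>+x. f x \<partial>z1) + ennreal (1 - t) * (\<integral>\<^sup>+x. f x \<partial>z2)"
proof -
  have meas: "g \<in> borel_measurable (mix_measure MT t z1 z2)" "g \<in> borel_measurable z1"
    "g \<in> borel_measurable z2" if "g \<in> borel_measurable MT" for g :: "_ \<Rightarrow> ennreal"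
    using that measurable_cong_sets[OF sets(1) refl] measurable_cong_sets[OF sets(2) refl] by auto
  from \<open>f \<in> borel_measurable MT\<close> show ?thesis
  proof induction
    case (cong f g)
    have "space z1 = space MT" "space z2 = space MT" using sets by (metis sets_eq_imp_space_eq)+
    with cong show ?case by (simp cong: nn_integral_cong_simp)
  next
    case (set A)
    then show ?case using sets by (simp add: emeasure_mix_measure)
  next
    case (mult f c)
    then show ?case
      unfolding nn_integral_cmult[OF meas(1)[OF mult(2)]] nn_integral_cmult[OF meas(2)[OF mult(2)]]
        nn_integral_cmult[OF meas(3)[OF mult(2)]]
      by (simp only: distrib_left ac_simps)
  next
    case (add f g)
    then show ?case by (simp add: nn_integral_add meas distrib_left)
  next
    case (seq U)
    have "(\<integral>\<^sup>+x. (SUP i. U i) x \<partial>mix_measure MT t z1 z2)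
        = (SUP i. \<integral>\<^sup>+x. U i x \<partial>mix_measure MT t z1 z2)"
      using seq by (simp add: nn_integral_monotone_convergence_SUP meas image_comp)
    also have "\<dots> = (SUP i. ennreal t * (\<integral>\<^sup>+x. U i x \<partial>z1) + ennreal (1 - t) * (\<integral>\<^sup>+x. U i x \<partial>z2))"
      using seq by simp
    also have "\<dots> = (SUP i. ennreal t * (\<integral>\<^sup>+x. U i x \<partial>z1)) + (SUP i. ennreal (1 - t) * (\<integral>\<^sup>+x. U i x \<partial>z2))"
      using \<open>incseq U\<close> by (intro ennreal_SUP_add)
        (auto intro!: mult_left_mono nn_integral_mono le_funD[OF incseqD[OF \<open>incseq U\<close>]] simp: incseq_def)
    also have "\<dots> = ennreal t * (SUP i. \<integral>\<^sup>+x. U i x \<partial>z1) + ennreal (1 - t) * (SUP i. \<integral>\<^sup>+x. U i x \<partial>z2)"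
      by (simp add: SUP_mult_left_ennreal)
    also have "\<dots> = ennreal t * (\<integral>\<^sup>+x. (SUP i. U i) x \<partial>z1) + ennreal (1 - t) * (\<integral>\<^sup>+x. (SUP i. U i) x \<partial>z2)"
      using seq by (simp add: nn_integral_monotone_convergence_SUP meas image_comp)
    finally show ?case .
  qed
qed

locale density_kernel =
  fixes nu :: "'y measure" and MT :: "'t measure" and k :: "'t \<Rightarrow> 'y \<Rightarrow> real"
  assumes sigma_finite_nu: "sigma_finite_measure nu"
    and measurable_k: "(\<lambda>(\<theta>, y). k \<theta> y) \<in> borel_measurable (MT \<Otimes>\<^sub>M nu)"
    and k_pos: "\<And>\<theta> y. \<theta> \<in> space MT \<Longrightarrow> y \<in> space nu \<Longrightarrow> 0 < k \<theta> y"
    and k_normalized: "\<And>\<theta>. \<theta> \<in> space MT \<Longrightarrow> (\<integral>\<^sup>+ y. ennreal (k \<theta> y) \<partial>nu) = 1"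

locale density_kernel_mixture = density_kernel +
  fixes z :: "'t measure"
  assumes z_prob_measure: "z \<in> prob_measures MT"
begin

sublocale prob_space z
  using z_prob_measure by (simp add: prob_measures_def space_prob_algebra)

lemma sets_z: "sets z = sets MT"
  using z_prob_measure by (simp add: prob_measures_def space_prob_algebra)

lemma space_z: "space z = space MT"
  using sets_z by (rule sets_eq_imp_space_eq)

sublocale pair_sigma_finite z nu
  by (simp add: pair_sigma_finite_def sigma_finite_nu prob_space_imp_sigma_finite prob_space_axioms)

lemma measurable_k_z[measurable]: "(\<lambda>(\<theta>, y). k \<theta> y) \<in> borel_measurable (z \<Otimes>\<^sub>M nu)"
  using measurable_k by (simp add: measurable_cong_sets[OF sets_pair_measure_cong[OF sets_z refl] refl])

lemma measurable_k_z_swap[measurable]: "(\<lambda>(y, \<theta>). k \<theta> y) \<in> borel_measurable (nu \<Otimes>\<^sub>M z)"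
  using measurable_k_z measurable_pair_swap_iff[of "\<lambda>(\<theta>, y). k \<theta> y"] by simp

lemma borel_measurable_mixk[measurable]: "mixk k z \<in> borel_measurable nu"
  unfolding mixk_def[abs_def]
  by (rule sigma_finite_measure.borel_measurable_lebesgue_integral[OF
      prob_space_imp_sigma_finite[OF prob_space_axioms] measurable_k_z_swap])

lemma nn_integral_mixture_density: "(\<integral>\<^sup>+y. (\<integral>\<^sup>+\<theta>. ennreal (k \<theta> y) \<partial>z) \<partial>nu) = 1"
proof -
  have "(\<integral>\<^sup>+y. (\<integral>\<^sup>+\<theta>. ennreal (k \<theta> y) \<partial>z) \<partial>nu) = (\<integral>\<^sup>+\<theta>. \<integral>\<^sup>+y. ennreal (k \<theta> y) \<partial>nu \<partial>z)"
    by (rule Fubini') measurable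
  also have "\<dots> = (\<integral>\<^sup>+\<theta>. 1 \<partial>z)"
    by (intro nn_integral_cong) (simp add: k_normalized space_z)
  finally show ?thesis by (simp add: emeasure_space_1)
qed

text \<open>\<open>mixk\<close> is a Bochner integral, hence junk (\<open>0\<close>) wherever \<open>\<zeta>k\<close> is infinite; this
  happens only on a \<open>\<nu>\<close>-null set because \<open>\<zeta>k\<close> is a probability density.\<close>

lemma mixk_eq_nn_integral:
  assumes y: "y \<in> space nu" and fin: "(\<integral>\<^sup>+\<theta>. ennreal (k \<theta> y) \<partial>z) \<noteq> \<infinity>"
  shows "0 < mixk k z y" "ennreal (mixk k z y) = (\<integral>\<^sup>+\<theta>. ennreal (k \<theta> y) \<partial>z)"
proof -
  have k_y_pos: "\<And>\<theta>. \<theta> \<in> space z \<Longrightarrow> 0 < k \<theta> y" using k_pos y by (simp add: space_z)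
  have meas: "(\<lambda>\<theta>. k \<theta> y) \<in> borel_measurable z" using y by measurable
  have "integrable z (\<lambda>\<theta>. k \<theta> y)"
  proof (rule integrableI_bounded[OF meas])
    have "(\<integral>\<^sup>+\<theta>. ennreal (norm (k \<theta> y)) \<partial>z) = (\<integral>\<^sup>+\<theta>. ennreal (k \<theta> y) \<partial>z)"
      using k_y_pos by (intro nn_integral_cong) (simp add: less_imp_le)
    then show "(\<integral>\<^sup>+\<theta>. ennreal (norm (k \<theta> y)) \<partial>z) < \<infinity>" using fin by (simp add: less_top)
  qed
  then show eq: "ennreal (mixk k z y) = (\<integral>\<^sup>+\<theta>. ennreal (k \<theta> y) \<partial>z)"
    unfolding mixk_def using k_y_pos by (subst nn_integral_eq_integral) (auto intro: less_imp_le)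
  have "(\<integral>\<^sup>+\<theta>. ennreal (k \<theta> y) \<partial>z) \<noteq> 0"
  proof
    assume "(\<integral>\<^sup>+\<theta>. ennreal (k \<theta> y) \<partial>z) = 0"
    then have "AE \<theta> in z. ennreal (k \<theta> y) = 0" using meas by (simp add: nn_integral_0_iff_AE)
    moreover have "AE \<theta> in z. ennreal (k \<theta> y) \<noteq> 0"
      using k_y_pos by (intro AE_I2) (force simp: ennreal_eq_0_iff)
    ultimately have "AE \<theta> in z. False" by eventually_elim simp
    then show False by simp
  qed
  then show "0 < mixk k z y" using eq by (metis ennreal_eq_0_iff not_le)
qed

lemma AE_mixk:
  "AE y in nu. 0 < mixk k z y \<and> ennreal (mixk k z y) = (\<integral>\<^sup>+\<theta>. ennreal (k \<theta> y) \<partial>z)"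
proof -
  have "AE y in nu. (\<integral>\<^sup>+\<theta>. ennreal (k \<theta> y) \<partial>z) \<noteq> \<infinity>"
    by (rule nn_integral_noteq_infinite) (use nn_integral_mixture_density in auto)
  then show ?thesis
    by (rule AE_mp) (rule AE_I2, auto intro: mixk_eq_nn_integral)
qed

lemma mixK_eq_set_nn_integral_mixk:
  assumes A: "A \<in> sets nu"
  shows "mixK nu k z A = (\<integral>\<^sup>+y\<in>A. ennreal (mixk k z y) \<partial>nu)"
proof -
  have "mixK nu k z A = (\<integral>\<^sup>+\<theta>. \<integral>\<^sup>+y. ennreal (k \<theta> y) * indicator A y \<partial>nu \<partial>z)"
    unfolding mixK_def kernelK_def by simp
  also have "\<dots> = (\<integral>\<^sup>+y. \<integral>\<^sup>+\<theta>. ennreal (k \<theta> y) * indicator A y \<partial>z \<partial>nu)"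
    by (rule Fubini'[symmetric]) (use A in measurable)
  also have "\<dots> = (\<integral>\<^sup>+y. (\<integral>\<^sup>+\<theta>. ennreal (k \<theta> y) \<partial>z) * indicator A y \<partial>nu)"
    by (intro nn_integral_cong nn_integral_multc) measurable
  also have "\<dots> = (\<integral>\<^sup>+y\<in>A. ennreal (mixk k z y) \<partial>nu)"
    by (rule nn_integral_cong_AE) (use AE_mixk in \<open>eventually_elim, simp\<close>)
  finally show ?thesis .
qed

end

context density_kernel
begin

lemma AE_mixk_mix_measure:
  assumes z1: "z1 \<in> prob_measures MT" and z2: "z2 \<in> prob_measures MT" and t: "0 \<le> t" "t \<le> 1"
  shows "AE y in nu. mixk k (mix_measure MT t z1 z2) y = t * mixk k z1 y + (1 - t) * mixk k z2 y"
proof -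
  interpret z1: density_kernel_mixture nu MT k z1 by unfold_locales (rule z1)
  interpret z2: density_kernel_mixture nu MT k z2 by unfold_locales (rule z2)
  interpret z: density_kernel_mixture nu MT k "mix_measure MT t z1 z2"
    by unfold_locales (rule mix_measure_in_prob_measures[OF z1 z2 t])
  show ?thesis
    using z1.AE_mixk z2.AE_mixk z.AE_mixk AE_space
  proof eventually_elim
    case (elim y)
    have "(\<lambda>\<theta>. ennreal (k \<theta> y)) \<in> borel_measurable MT"
      using elim(4) measurable_k by measurable
    then have "ennreal (mixk k (mix_measure MT t z1 z2) y)
        = ennreal t * ennreal (mixk k z1 y) + ennreal (1 - t) * ennreal (mixk k z2 y)"
      using elim(1-3) z1.sets_z z2.sets_z by (simp add: nn_integral_mix_measure)
    also have "\<dots> = ennreal (t * mixk k z1 y + (1 - t) * mixk k z2 y)"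
      using elim(1,2) t by (simp add: ennreal_mult)
    finally show ?case
      using elim(1,2,3) t by (subst (asm) ennreal_inj) auto
  qed
qed

lemma mixK_eq_if_AE_mixk_eq:
  assumes z1: "z1 \<in> prob_measures MT" and z2: "z2 \<in> prob_measures MT"
    and eq: "AE y in nu. mixk k z1 y = mixk k z2 y" and A: "A \<in> sets nu"
  shows "mixK nu k z1 A = mixK nu k z2 A"
proof -
  interpret z1: density_kernel_mixture nu MT k z1 by unfold_locales (rule z1)
  interpret z2: density_kernel_mixture nu MT k z2 by unfold_locales (rule z2)
  show ?thesis
    using eq unfolding z1.mixK_eq_set_nn_integral_mixk[OF A] z2.mixK_eq_set_nn_integral_mixk[OF A]
    by (intro nn_integral_cong_AE) auto
qed

end

definition alpha_div :: "'y measure \<Rightarrow> real \<Rightarrow> ('y \<Rightarrow> real) \<Rightarrow> ('y \<Rightarrow> real) \<Rightarrow> ennreal" where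
  "alpha_div nu \<alpha> p g = (\<integral>\<^sup>+ y. ennreal (f_alpha \<alpha> (g y / p y) * p y) \<partial>nu)"

lemma Psi_eq_alpha_div: "Psi nu k p \<alpha> \<zeta> = alpha_div nu \<alpha> p (mixk k \<zeta>)"
  by (simp add: Psi_def alpha_div_def)

lemma alpha_div_cong_AE:
  "AE y in nu. g y = h y \<Longrightarrow> alpha_div nu \<alpha> p g = alpha_div nu \<alpha> p h"
  unfolding alpha_div_def by (rule nn_integral_cong_AE) auto

lemma f_alpha_perspective_midpoint:
  assumes "0 < c" "0 < a" "0 < b"
  shows "2 * (f_alpha \<alpha> ((a + b) / 2 / c) * c) \<le> f_alpha \<alpha> (a / c) * c + f_alpha \<alpha> (b / c) * c"
    and "2 * (f_alpha \<alpha> ((a + b) / 2 / c) * c) = f_alpha \<alpha> (a / c) * c + f_alpha \<alpha> (b / c) * c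
      \<Longrightarrow> a = b"
proof -
  have mid: "(a + b) / 2 / c = (a / c + b / c) / 2" by (simp add: add_divide_distrib)
  have "0 < a / c" "0 < b / c" using assms by simp_all
  note less = f_alpha_midpoint_less[OF this, of \<alpha>]
  show "2 * (f_alpha \<alpha> ((a + b) / 2 / c) * c) \<le> f_alpha \<alpha> (a / c) * c + f_alpha \<alpha> (b / c) * c"
    using less \<open>0 < c\<close> unfolding mid
    by (cases "a = b") (auto simp flip: distrib_right intro!: mult_right_mono)
  show "a = b"
    if "2 * (f_alpha \<alpha> ((a + b) / 2 / c) * c) = f_alpha \<alpha> (a / c) * c + f_alpha \<alpha> (b / c) * c"
    using that less \<open>0 < c\<close> unfolding mid by (auto simp flip: distrib_right)
qed

lemma AE_eq_if_AE_le_and_nn_integral_ge: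
  fixes a b :: "'a \<Rightarrow> real"
  assumes [measurable]: "a \<in> borel_measurable M" "b \<in> borel_measurable M"
    and le: "AE x in M. 0 \<le> a x \<and> a x \<le> b x"
    and ge: "(\<integral>\<^sup>+x. b x \<partial>M) \<le> (\<integral>\<^sup>+x. a x \<partial>M)" and fin: "(\<integral>\<^sup>+x. b x \<partial>M) < \<infinity>"
  shows "AE x in M. a x = b x"
proof -
  have split: "(\<integral>\<^sup>+x. b x \<partial>M) = (\<integral>\<^sup>+x. a x \<partial>M) + (\<integral>\<^sup>+x. ennreal (b x - a x) \<partial>M)"
    using le by (subst nn_integral_add[symmetric]) (auto intro!: nn_integral_cong_AE simp flip: ennreal_plus)
  with ge fin have "(\<integral>\<^sup>+x. ennreal (b x - a x) \<partial>M) = 0"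
    by auto
  then have "AE x in M. ennreal (b x - a x) = 0" by (simp add: nn_integral_0_iff_AE)
  with le show ?thesis by eventually_elim (simp add: ennreal_eq_0_iff)
qed

lemma AE_eq_if_alpha_div_midpoint_ge:
  fixes g1 g2 p :: "'y \<Rightarrow> real"
  assumes [measurable]: "g1 \<in> borel_measurable nu" "g2 \<in> borel_measurable nu" "p \<in> borel_measurable nu"
    and p_pos: "\<And>y. y \<in> space nu \<Longrightarrow> 0 < p y"
    and g_pos: "AE y in nu. 0 < g1 y \<and> 0 < g2 y"
    and ge: "alpha_div nu \<alpha> p g1 + alpha_div nu \<alpha> p g2 \<le> 2 * alpha_div nu \<alpha> p (\<lambda>y. (g1 y + g2 y) / 2)"
    and fin: "alpha_div nu \<alpha> p g1 + alpha_div nu \<alpha> p g2 < \<infinity>"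
  shows "AE y in nu. g1 y = g2 y"
proof -
  define \<Phi> where "\<Phi> g y = f_alpha \<alpha> (g y / p y) * p y" for g :: "'y \<Rightarrow> real" and y
  define h where "h y = (g1 y + g2 y) / 2" for y
  have [measurable]: "h \<in> borel_measurable nu" unfolding h_def[abs_def] by measurable
  have [measurable]: "\<Phi> g \<in> borel_measurable nu" if [measurable]: "g \<in> borel_measurable nu" for g
    unfolding \<Phi>_def[abs_def] by measurable
  have \<Phi>_nonneg: "0 \<le> \<Phi> g y" if "0 < g y" "y \<in> space nu" for g y
    unfolding \<Phi>_def using that p_pos[OF that(2)]
    by (intro mult_nonneg_nonneg f_alpha_nonneg) auto
  have pointwise: "AE y in nu. 0 \<le> \<Phi> g1 y \<and> 0 \<le> \<Phi> g2 y \<and> 0 \<le> 2 * \<Phi> h y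
      \<and> 2 * \<Phi> h y \<le> \<Phi> g1 y + \<Phi> g2 y \<and> (2 * \<Phi> h y = \<Phi> g1 y + \<Phi> g2 y \<longrightarrow> g1 y = g2 y)"
    using g_pos AE_space
  proof eventually_elim
    case (elim y)
    then have "0 \<le> \<Phi> g1 y" "0 \<le> \<Phi> g2 y" "0 \<le> \<Phi> h y" by (auto intro!: \<Phi>_nonneg simp: h_def)
    with elim f_alpha_perspective_midpoint[OF p_pos, of y "g1 y" "g2 y" \<alpha>]
    show ?case by (auto simp: \<Phi>_def h_def)
  qed
  have "(\<integral>\<^sup>+y. ennreal (\<Phi> g1 y + \<Phi> g2 y) \<partial>nu) = alpha_div nu \<alpha> p g1 + alpha_div nu \<alpha> p g2"
    using pointwise unfolding alpha_div_def
    by (subst nn_integral_add[symmetric]) (auto intro!: nn_integral_cong_AE simp: \<Phi>_def)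
  moreover have "(\<integral>\<^sup>+y. ennreal (2 * \<Phi> h y) \<partial>nu) = 2 * alpha_div nu \<alpha> p h"
    unfolding alpha_div_def \<Phi>_def
    by (subst nn_integral_cmult[symmetric]) (measurable, simp add: ennreal_mult')
  ultimately have "AE y in nu. 2 * \<Phi> h y = \<Phi> g1 y + \<Phi> g2 y"
    using pointwise ge fin
    by (intro AE_eq_if_AE_le_and_nn_integral_ge) (auto simp: h_def[abs_def])
  with pointwise show ?thesis by eventually_elim auto
qed

theorem mainTheorem5:
  fixes nu :: "'y measure" and MT :: "'t measure"
    and k :: "'t \<Rightarrow> 'y \<Rightarrow> real" and p :: "'y \<Rightarrow> real" and \<alpha> :: real
    and M :: "'t measure set" and \<zeta>1 \<zeta>2 :: "'t measure"
  assumes sf: "sigma_finite_measure nu"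
    and k_meas: "(\<lambda>(\<theta>, y). k \<theta> y) \<in> borel_measurable (MT \<Otimes>\<^sub>M nu)"
    and k_pos: "\<And>\<theta> y. \<theta> \<in> space MT \<Longrightarrow> y \<in> space nu \<Longrightarrow> k \<theta> y > 0"
    and k_norm: "\<And>\<theta>. \<theta> \<in> space MT \<Longrightarrow> (\<integral>\<^sup>+ y. ennreal (k \<theta> y) \<partial>nu) = 1"
    and p_meas: "p \<in> borel_measurable nu"
    and p_pos: "\<And>y. y \<in> space nu \<Longrightarrow> p y > 0"
    and p_int: "(\<integral>\<^sup>+ y. ennreal (p y) \<partial>nu) < \<infinity>"
    and M_sub: "M \<subseteq> prob_measures MT"
    and M_conv: "convex_measure_set MT M"
    and z1: "\<zeta>1 \<in> M" and z2: "\<zeta>2 \<in> M"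
    and opt1: "Psi nu k p \<alpha> \<zeta>1 = (INF \<zeta>\<in>M. Psi nu k p \<alpha> \<zeta>)"
    and opt2: "Psi nu k p \<alpha> \<zeta>2 = (INF \<zeta>\<in>M. Psi nu k p \<alpha> \<zeta>)"
    and fin: "(INF \<zeta>\<in>M. Psi nu k p \<alpha> \<zeta>) < \<infinity>"
  shows "\<forall>A\<in>sets nu. mixK nu k \<zeta>1 A = mixK nu k \<zeta>2 A"
proof -
  interpret density_kernel nu MT k using sf k_meas k_pos k_norm by (rule density_kernel.intro)
  have z: "\<zeta>1 \<in> prob_measures MT" "\<zeta>2 \<in> prob_measures MT" using M_sub z1 z2 by auto
  interpret z1: density_kernel_mixture nu MT k \<zeta>1 by unfold_locales (fact z)
  interpret z2: density_kernel_mixture nu MT k \<zeta>2 by unfold_locales (fact z)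
  define \<zeta> where "\<zeta> = mix_measure MT (1 / 2) \<zeta>1 \<zeta>2"
  have "\<zeta> \<in> M" using M_conv z1 z2 by (simp add: convex_measure_set_def \<zeta>_def)
  have "AE y in nu. mixk k \<zeta> y = (mixk k \<zeta>1 y + mixk k \<zeta>2 y) / 2"
    using AE_mixk_mix_measure[OF z, of "1 / 2"] by (simp add: \<zeta>_def add_divide_distrib)
  then have "Psi nu k p \<alpha> \<zeta> = alpha_div nu \<alpha> p (\<lambda>y. (mixk k \<zeta>1 y + mixk k \<zeta>2 y) / 2)"
    by (simp add: Psi_eq_alpha_div alpha_div_cong_AE)
  moreover have "Psi nu k p \<alpha> \<zeta>1 + Psi nu k p \<alpha> \<zeta>2 \<le> 2 * Psi nu k p \<alpha> \<zeta>"
    using opt1 opt2 INF_lower[OF \<open>\<zeta> \<in> M\<close>, of "Psi nu k p \<alpha>"] by (simp add: mult_2 add_mono)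
  moreover have "Psi nu k p \<alpha> \<zeta>1 + Psi nu k p \<alpha> \<zeta>2 < \<infinity>"
    using opt1 opt2 fin by simp
  ultimately have "AE y in nu. mixk k \<zeta>1 y = mixk k \<zeta>2 y"
    using z1.AE_mixk z2.AE_mixk
    by (intro AE_eq_if_alpha_div_midpoint_ge[OF _ _ p_meas p_pos]) (auto simp: Psi_eq_alpha_div)
  then show ?thesis by (auto intro: mixK_eq_if_AE_mixk_eq[OF z])
qed

end
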